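(* Let $k\in\mathbb N^+$ and let $G=(V,E)$ be a graph without isolated vertices. If $G$ contains an independent set of size $(k-1)^2+1$, then $G$ has a $k$-edge induced subgraph.
   Context: All graphs are simple (finite, nonempty vertex set, undirected, no loops or multiple edges). A vertex is isolated if it has degree $0$. A $k$-edge induced subgraph of $G$ is an induced subgraph $G[S]$ ($S\neq\emptyset$) with exactly $k$ edges. *)

theory Defs
  imports Main
begin

definition simple_graph :: "'a set \<Rightarrow> 'a set set \<Rightarrow> bool" where
  "simple_graph V E \<longleftrightarrow> finite V \<and> V \<noteq> {} \<and> (\<forall>e\<in>E. e \<subseteq> V \<and> card e = 2)"

definition degree :: "'a set set \<Rightarrow> 'a \<Rightarrow> nat" where
  "degree E v = card {e \<in> E. v \<in> e}"

definition isolated :: "'a set set \<Rightarrow> 'a \<Rightarrow> bool" where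
  "isolated E v \<longleftrightarrow> degree E v = 0"

definition independent_set :: "'a set \<Rightarrow> 'a set set \<Rightarrow> 'a set \<Rightarrow> bool" where
  "independent_set V E I \<longleftrightarrow> I \<subseteq> V \<and> (\<forall>e\<in>E. \<not> e \<subseteq> I)"

definition induced_edges :: "'a set set \<Rightarrow> 'a set \<Rightarrow> 'a set set" where
  "induced_edges E S = {e \<in> E. e \<subseteq> S}"

definition has_k_edge_induced_subgraph :: "'a set \<Rightarrow> 'a set set \<Rightarrow> nat \<Rightarrow> bool" where
  "has_k_edge_induced_subgraph V E k \<longleftrightarrow>
     (\<exists>S. S \<subseteq> V \<and> S \<noteq> {} \<and> card (induced_edges E S) = k)"

end

theory Submission
  imports Defs
begin

(*
  Every vertex of the independent set I has a neighbour outside I. If some outside vertex y has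
  at least k neighbours in I, then y together with k of them induces a star with k edges.
  Otherwise take a minimal set Y of outside vertices dominating I: each y in Y covers at most
  k - 1 vertices of I, so |Y| >= k, and by minimality each y in Y has a private neighbour p y
  in I. Since adding a vertex to Z raises e(Z) by at most |Z|, some Z within Y satisfies
  e(Z) <= k <= e(Z) + |Z|. Adding the private neighbours of k - e(Z) vertices of Z creates
  exactly one new edge each, which yields an induced subgraph with exactly k edges.
*)

definition neighbours :: "'a set set \<Rightarrow> 'a \<Rightarrow> 'a set" where
  "neighbours E v = {u. {u, v} \<in> E}"

lemma neighbours_sym: "u \<in> neighbours E v \<longleftrightarrow> v \<in> neighbours E u"
  by (simp add: neighbours_def insert_commute)

lemma not_in_neighbours_self:
  assumes "simple_graph V E"
  shows "v \<notin> neighbours E v"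
  using assms by (auto simp: neighbours_def simple_graph_def)

lemma simple_graph_edgeE:
  assumes "simple_graph V E" "e \<in> E" "a \<in> e"
  obtains u where "u \<noteq> a" "e = {u, a}" "u \<in> neighbours E a"
proof -
  have "card e = 2" using assms by (simp add: simple_graph_def)
  with assms(3) obtain u where "u \<noteq> a" "e = {u, a}"
    by (fastforce simp: card_2_iff insert_commute)
  with assms(2) that show ?thesis by (simp add: neighbours_def)
qed

lemma independent_set_subset:
  "independent_set V E I \<Longrightarrow> A \<subseteq> I \<Longrightarrow> independent_set V E A"
  unfolding independent_set_def by blast

lemma finite_induced_edges: "finite S \<Longrightarrow> finite (induced_edges E S)"
  by (rule finite_subset[of _ "Pow S"]) (auto simp: induced_edges_def)

lemma induced_edges_empty: "simple_graph V E \<Longrightarrow> induced_edges E {} = {}"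
  by (auto simp: induced_edges_def simple_graph_def)

lemma card_induced_edges_insert:
  assumes sg: "simple_graph V E" and S: "finite S" "a \<notin> S"
  shows "card (induced_edges E (insert a S))
           = card (induced_edges E S) + card (neighbours E a \<inter> S)"
proof -
  have split: "induced_edges E (insert a S)
                 = induced_edges E S \<union> (\<lambda>u. {u, a}) ` (neighbours E a \<inter> S)"
  proof (intro equalityI subsetI)
    fix e assume e: "e \<in> induced_edges E (insert a S)"
    show "e \<in> induced_edges E S \<union> (\<lambda>u. {u, a}) ` (neighbours E a \<inter> S)"
    proof (cases "a \<in> e")
      case True
      with e sg obtain u where "u \<noteq> a" "e = {u, a}" "u \<in> neighbours E a"
        by (auto simp: induced_edges_def elim: simple_graph_edgeE)
      with e show ?thesis by (auto simp: induced_edges_def)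
    next
      case False
      with e show ?thesis by (auto simp: induced_edges_def)
    qed
  qed (auto simp: induced_edges_def neighbours_def)
  have "induced_edges E S \<inter> (\<lambda>u. {u, a}) ` (neighbours E a \<inter> S) = {}"
    using S(2) by (auto simp: induced_edges_def)
  moreover have "inj_on (\<lambda>u. {u, a}) (neighbours E a \<inter> S)"
    using S(2) by (auto simp: inj_on_def doubleton_eq_iff)
  ultimately show ?thesis
    by (simp add: split card_Un_disjoint finite_induced_edges S(1) card_image)
qed

lemma card_induced_edges_Un_independent:
  assumes sg: "simple_graph V E" and "finite Z" "finite A" "Z \<inter> A = {}"
    and "independent_set V E A"
  shows "card (induced_edges E (Z \<union> A))
           = card (induced_edges E Z) + (\<Sum>a\<in>A. card (neighbours E a \<inter> Z))"
  using assms(3-5)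
proof (induction A rule: finite_induct)
  case empty
  then show ?case by simp
next
  case (insert a A)
  have "neighbours E a \<inter> (Z \<union> A) = neighbours E a \<inter> Z"
    using insert.prems(2) by (auto simp: independent_set_def neighbours_def)
  then have "card (induced_edges E (Z \<union> insert a A))
               = card (induced_edges E (Z \<union> A)) + card (neighbours E a \<inter> Z)"
    using card_induced_edges_insert[OF sg, of "Z \<union> A" a] insert \<open>finite Z\<close> by simp
  moreover have "independent_set V E A"
    using insert.prems(2) by (rule independent_set_subset) blast
  with insert.prems(1) have "card (induced_edges E (Z \<union> A))
      = card (induced_edges E Z) + (\<Sum>a\<in>A. card (neighbours E a \<inter> Z))"
    by (intro insert.IH) auto
  ultimately show ?case
    using insert.hyps by simp
qed

corollary card_induced_edges_Un_pendants:
  assumes "simple_graph V E" "finite Z" "finite A" "Z \<inter> A = {}" "independent_set V E A"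
    and "\<forall>a\<in>A. card (neighbours E a \<inter> Z) = 1"
  shows "card (induced_edges E (Z \<union> A)) = card (induced_edges E Z) + card A"
  using card_induced_edges_Un_independent[OF assms(1-5)] assms(6) by simp

lemma exists_subset_card_induced_edges_between:
  assumes sg: "simple_graph V E" and "finite Y"
    and "k \<le> card (induced_edges E Y) + card Y"
  shows "\<exists>Z\<subseteq>Y. card (induced_edges E Z) \<le> k \<and> k \<le> card (induced_edges E Z) + card Z"
  using assms(2,3)
proof (induction Y rule: finite_induct)
  case empty
  then show ?case by (simp add: induced_edges_empty[OF sg])
next
  case (insert y Y)
  show ?case
  proof (cases "k \<le> card (induced_edges E Y) + card Y")
    case True
    with insert.IH show ?thesis by blast
  next
    case False
    have "card (neighbours E y \<inter> Y) \<le> card Y"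
      using insert.hyps(1) by (simp add: card_mono)
    then have "card (induced_edges E (insert y Y)) \<le> k"
      using False card_induced_edges_insert[OF sg insert.hyps(1,2)] by linarith
    with insert.prems show ?thesis by blast
  qed
qed

definition private_neighbours :: "'a set set \<Rightarrow> 'a set \<Rightarrow> 'a set \<Rightarrow> ('a \<Rightarrow> 'a) \<Rightarrow> bool" where
  "private_neighbours E X Y p \<longleftrightarrow>
     (\<forall>y\<in>Y. p y \<in> X \<inter> neighbours E y \<and> (\<forall>y'\<in>Y. p y \<in> neighbours E y' \<longrightarrow> y' = y))"

lemma private_neighbours_subset: "private_neighbours E X Y p \<Longrightarrow> p ` Y \<subseteq> X"
  by (auto simp: private_neighbours_def)

lemma private_neighbours_inj_on: "private_neighbours E X Y p \<Longrightarrow> inj_on p Y"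
  unfolding private_neighbours_def by (rule inj_onI) (metis IntD2)

lemma private_neighbours_Int:
  assumes "private_neighbours E X Y p" "Z \<subseteq> Y" "z \<in> Z"
  shows "neighbours E (p z) \<inter> Z = {z}"
proof -
  have "u = z" if "u \<in> Z" "p z \<in> neighbours E u" for u
    using assms that unfolding private_neighbours_def by blast
  moreover have "p z \<in> neighbours E z"
    using assms unfolding private_neighbours_def by blast
  ultimately show ?thesis
    using assms(3) neighbours_sym[of _ E "p z"] by blast
qed

lemma obtain_dominating_subset_private_neighbours:
  assumes "finite W" "X \<subseteq> (\<Union>w\<in>W. neighbours E w)"
  obtains Y p where "Y \<subseteq> W" "X \<subseteq> (\<Union>y\<in>Y. neighbours E y)" "private_neighbours E X Y p"
proof -
  define dominating where "dominating Y \<longleftrightarrow> Y \<subseteq> W \<and> X \<subseteq> (\<Union>y\<in>Y. neighbours E y)" for Y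
  obtain Y where Y: "dominating Y" and min: "\<And>Y'. dominating Y' \<Longrightarrow> card Y \<le> card Y'"
    using ex_has_least_nat[of dominating W card] assms(2) by (auto simp: dominating_def)
  have "finite Y"
    using Y assms(1) finite_subset by (auto simp: dominating_def)
  have "\<exists>x. x \<in> X \<inter> neighbours E y \<and> (\<forall>y'\<in>Y. x \<in> neighbours E y' \<longrightarrow> y' = y)"
    if "y \<in> Y" for y
  proof -
    have "\<not> dominating (Y - {y})"
      using min card_Diff1_less[OF \<open>finite Y\<close> that] by fastforce
    then show ?thesis
      using Y unfolding dominating_def by blast
  qed
  then obtain p where "private_neighbours E X Y p"
    unfolding private_neighbours_def by metis
  with Y that show ?thesis by (auto simp: dominating_def)
qed

lemma independent_set_covered_by_outside_neighbours:
  assumes sg: "simple_graph V E" and I: "independent_set V E I"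
    and no_isolated: "\<forall>v\<in>V. \<not> isolated E v"
  shows "I \<subseteq> (\<Union>y\<in>V - I. neighbours E y)"
proof
  fix x assume "x \<in> I"
  with I no_isolated have "degree E x \<noteq> 0"
    by (auto simp: independent_set_def isolated_def)
  then have "{e \<in> E. x \<in> e} \<noteq> {}"
    unfolding degree_def by (metis card.empty)
  then obtain e where e: "e \<in> E" "x \<in> e"
    by blast
  with sg obtain u where u: "e = {u, x}" "u \<in> neighbours E x"
    by (rule simple_graph_edgeE)
  have "e \<subseteq> V" "\<not> e \<subseteq> I"
    using sg I e(1) by (auto simp: simple_graph_def independent_set_def)
  with u(1) \<open>x \<in> I\<close> have "u \<in> V - I" by blast
  moreover have "x \<in> neighbours E u"
    using u(2) by (simp add: neighbours_sym)
  ultimately show "x \<in> (\<Union>y\<in>V - I. neighbours E y)" by blast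
qed

lemma card_dominating_set_gt:
  assumes "finite Y" "finite X" "X \<subseteq> (\<Union>y\<in>Y. neighbours E y)"
    and small: "\<forall>y\<in>Y. card (neighbours E y \<inter> X) \<le> m" and big: "m^2 < card X"
  shows "m < card Y"
proof -
  have "card X \<le> card (\<Union>y\<in>Y. neighbours E y \<inter> X)"
    using assms(1-3) by (intro card_mono) auto
  also have "\<dots> \<le> (\<Sum>y\<in>Y. card (neighbours E y \<inter> X))"
    using assms(1) by (rule card_UN_le)
  also have "\<dots> \<le> card Y * m"
    using sum_bounded_above[of Y "\<lambda>y. card (neighbours E y \<inter> X)" m] small by simp
  finally have "m * m < card Y * m"
    using big unfolding power2_eq_square by linarith
  then show ?thesis
    by (simp add: mult_less_cancel2)
qed

lemma has_k_edge_induced_subgraph_star: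
  assumes sg: "simple_graph V E" and I: "independent_set V E I" and "y \<in> V"
    and many: "k \<le> card (neighbours E y \<inter> I)"
  shows "has_k_edge_induced_subgraph V E k"
proof -
  obtain A where A: "A \<subseteq> neighbours E y \<inter> I" "card A = k"
    using obtain_subset_with_card_n[OF many] by blast
  have "independent_set V E A"
    using I by (rule independent_set_subset) (use A(1) in blast)
  then have "A \<subseteq> V"
    by (simp add: independent_set_def)
  moreover have "finite V" using sg by (simp add: simple_graph_def)
  ultimately have "finite A"
    using finite_subset by blast
  have "{y} \<inter> A = {}"
    using A(1) not_in_neighbours_self[OF sg] by blast
  moreover have "\<forall>a\<in>A. card (neighbours E a \<inter> {y}) = 1"
  proof
    fix a assume "a \<in> A"
    then have "y \<in> neighbours E a"
      using A(1) neighbours_sym[of a E y] by blast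
    then show "card (neighbours E a \<inter> {y}) = 1"
      by (simp add: Int_absorb1)
  qed
  moreover have "card (induced_edges E {y}) = 0"
    using card_induced_edges_insert[OF sg, of "{}" y] induced_edges_empty[OF sg] by simp
  ultimately have "card (induced_edges E ({y} \<union> A)) = k"
    using card_induced_edges_Un_pendants[OF sg, of "{y}" A] \<open>finite A\<close>
      \<open>independent_set V E A\<close> A(2) by simp
  with \<open>A \<subseteq> V\<close> \<open>y \<in> V\<close> show ?thesis
    unfolding has_k_edge_induced_subgraph_def by (intro exI[of _ "{y} \<union> A"]) auto
qed

lemma has_k_edge_induced_subgraph_private_neighbours:
  assumes sg: "simple_graph V E" and I: "independent_set V E I" and Y: "Y \<subseteq> V - I"
    and private_nbr: "private_neighbours E I Y p" and k: "1 \<le> k" "k \<le> card Y"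
  shows "has_k_edge_induced_subgraph V E k"
proof -
  have "finite V" using sg by (simp add: simple_graph_def)
  with Y have "finite Y" by (meson Diff_subset finite_subset)
  with k(2) obtain Z where Z: "Z \<subseteq> Y" "card (induced_edges E Z) \<le> k"
    "k \<le> card (induced_edges E Z) + card Z"
    using exists_subset_card_induced_edges_between[OF sg, of Y k] by auto
  have "k - card (induced_edges E Z) \<le> card Z"
    using Z(3) by linarith
  then obtain Z' where Z': "Z' \<subseteq> Z" "card Z' = k - card (induced_edges E Z)"
    by (rule obtain_subset_with_card_n)
  have "finite Z"
    using \<open>finite Y\<close> Z(1) by (rule finite_subset[rotated])
  have "inj_on p Z'"
    using private_neighbours_inj_on[OF private_nbr] Z(1) Z'(1) by (meson inj_on_subset order_trans)
  then have "card (p ` Z') = card Z'"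
    by (rule card_image)
  moreover have "\<forall>a\<in>p ` Z'. card (neighbours E a \<inter> Z) = 1"
    using private_neighbours_Int[OF private_nbr Z(1)] Z'(1) by auto
  moreover have "p ` Z' \<subseteq> I"
    using private_neighbours_subset[OF private_nbr] Z(1) Z'(1) by blast
  then have "independent_set V E (p ` Z')"
    by (rule independent_set_subset[OF I])
  moreover have "finite (p ` Z')"
    using finite_subset[OF Z'(1) \<open>finite Z\<close>] by (rule finite_imageI)
  moreover have "Z \<inter> p ` Z' = {}"
    using \<open>p ` Z' \<subseteq> I\<close> Z(1) Y by blast
  ultimately have "card (induced_edges E (Z \<union> p ` Z')) = k"
    using card_induced_edges_Un_pendants[OF sg \<open>finite Z\<close>, of "p ` Z'"] Z(2) Z'(2) by simp
  moreover have "Z \<union> p ` Z' \<subseteq> V"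
    using \<open>p ` Z' \<subseteq> I\<close> I Z(1) Y by (auto simp: independent_set_def)
  moreover have "Z \<union> p ` Z' \<noteq> {}"
    using calculation(1) k(1) induced_edges_empty[OF sg] by auto
  ultimately show ?thesis
    unfolding has_k_edge_induced_subgraph_def by (intro exI[of _ "Z \<union> p ` Z'"]) auto
qed

lemma has_k_edge_induced_subgraph_sparse_outside:
  assumes sg: "simple_graph V E" and I: "independent_set V E I" and "1 \<le> k"
    and covered: "I \<subseteq> (\<Union>y\<in>V - I. neighbours E y)"
    and sparse: "\<forall>y\<in>V - I. card (neighbours E y \<inter> I) \<le> k - 1"
    and big: "(k - 1)^2 < card I"
  shows "has_k_edge_induced_subgraph V E k"
proof -
  have "finite V" using sg by (simp add: simple_graph_def)
  obtain Y p where Y: "Y \<subseteq> V - I" "I \<subseteq> (\<Union>y\<in>Y. neighbours E y)"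
    and private_nbr: "private_neighbours E I Y p"
    using obtain_dominating_subset_private_neighbours[OF _ covered] \<open>finite V\<close> by blast
  have "finite Y"
    using Y(1) \<open>finite V\<close> by (meson finite_Diff finite_subset)
  moreover have "finite I"
    using I \<open>finite V\<close> finite_subset unfolding independent_set_def by blast
  moreover note Y(2)
  moreover have "\<forall>y\<in>Y. card (neighbours E y \<inter> I) \<le> k - 1"
    using sparse Y(1) by blast
  ultimately have "k - 1 < card Y"
    using big by (rule card_dominating_set_gt)
  then have "k \<le> card Y"
    by linarith
  then show ?thesis
    by (rule has_k_edge_induced_subgraph_private_neighbours[OF sg I Y(1) private_nbr \<open>1 \<le> k\<close>])
qed

theorem lemma3p9:
  fixes V :: "'a set" and E :: "'a set set" and k :: nat
  assumes "simple_graph V E"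
    and "k \<ge> 1"
    and "\<forall>v\<in>V. \<not> isolated E v"
    and "\<exists>I. independent_set V E I \<and> card I = (k - 1)^2 + 1"
  shows "has_k_edge_induced_subgraph V E k"
proof -
  obtain I where I: "independent_set V E I" and card_I: "card I = (k - 1)^2 + 1"
    using assms(4) by blast
  show ?thesis
  proof (cases "\<exists>y\<in>V - I. k \<le> card (neighbours E y \<inter> I)")
    case True
    then show ?thesis
      using has_k_edge_induced_subgraph_star[OF assms(1) I] by blast
  next
    case False
    then have "\<forall>y\<in>V - I. card (neighbours E y \<inter> I) \<le> k - 1"
      by force
    moreover have "I \<subseteq> (\<Union>y\<in>V - I. neighbours E y)"
      using independent_set_covered_by_outside_neighbours[OF assms(1) I assms(3)] .
    ultimately show ?thesis
      using has_k_edge_induced_subgraph_sparse_outside[OF assms(1) I assms(2)] card_I by simp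
  qed
qed

end
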